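(* Let $\mu\in(0,1)$, $\rho\in[0,1]$, $\nu=\mu^2+\rho\mu(1-\mu)$ and $s=\mu(1-\mu)(1-\rho)$. Let $L_1(\mu,\nu)=\inf_{\pi\in\mathcal M(\mu,\nu)}\int P_1\,d\pi$ and $U_1(\mu,\nu)=\sup_{\pi\in\mathcal M(\mu,\nu)}\int P_1\,d\pi$ with $P_1(q)=3q^2-2q^3$. Then \[ L_1(\mu,\nu)=\nu+2\frac{(\mu-\nu)^2}{1-\mu}=\mu+s\{2\mu(1-\rho)-1\}, \] \[ U_1(\mu,\nu)=3\nu-2\frac{\nu^2}{\mu}=\mu+s\{2\mu+2\rho(1-\mu)-1\}. \] Moreover $U_1(\mu,\nu)-L_1(\mu,\nu)=2\mu(1-\mu)\rho(1-\rho)\le1/8$, and if $\mu>1/2$, then $\int P_1\,d\pi>\mu$ holds for every $\pi\in\mathcal M(\mu,\nu)$ if and only if $\rho<1-1/(2\mu)$.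
   Context: $\mathcal M(\mu,\nu)$ denotes the set of Borel probability measures $\pi$ on $[0,1]$ with $\int q\,d\pi(q)=\mu$ and $\int q^2\,d\pi(q)=\nu$. $P_1(q)=\mathbb{P}\{\mathrm{Bin}(3,q)\ge2\}$ is the three-vote majority success probability. *)

theory Defs
  imports "HOL-Probability.Probability"
begin

text \<open>Three-vote majority success probability P_1(q) = P(Bin(3,q) >= 2) = 3q^2 - 2q^3.\<close>
definition P1 :: "real \<Rightarrow> real" where
  "P1 q = 3 * q^2 - 2 * q^3"

definition moment_class :: "real \<Rightarrow> real \<Rightarrow> real measure set" where
  "moment_class \<mu> \<nu> = {\<pi>. prob_space \<pi> \<and> sets \<pi> = sets borel \<and> measure \<pi> {0..1} = 1 \<and>
      (\<integral>q. q \<partial>\<pi>) = \<mu> \<and> (\<integral>q. q^2 \<partial>\<pi>) = \<nu>}"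

definition L1 :: "real \<Rightarrow> real \<Rightarrow> real" where
  "L1 \<mu> \<nu> = (INF \<pi>\<in>moment_class \<mu> \<nu>. \<integral>q. P1 q \<partial>\<pi>)"

definition U1 :: "real \<Rightarrow> real \<Rightarrow> real" where
  "U1 \<mu> \<nu> = (SUP \<pi>\<in>moment_class \<mu> \<nu>. \<integral>q. P1 q \<partial>\<pi>)"

end

theory Submission
  imports Defs
begin

text \<open>For every real t the quadratic -2t^2 + (4t + 2t^2) q + (1 - 4t) q^2 lies below P1 on
  q \<le> 1, touching it at q = t (doubly) and at q = 1; for every u the quadratic
  2u^2 q + (3 - 4u) q^2 lies above P1 on q \<ge> 0, touching it at q = u and q = 0. Integrating
  against a measure with moments (\<mu>, \<nu>) gives bounds that depend on the measure only through
  (\<mu>, \<nu>); choosing t = (\<mu> - \<nu>)/(1 - \<mu>) and u = \<nu>/\<mu> optimises them, and the two-point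
  measures on {t, 1} and on {0, u} with moments (\<mu>, \<nu>) attain them.\<close>

lemma P1_ge_quadratic_minorant:
  fixes q t :: real
  assumes "q \<le> 1"
  shows "- 2 * t^2 + (4 * t + 2 * t^2) * q + (1 - 4 * t) * q^2 \<le> P1 q"
proof -
  have "P1 q - (- 2 * t^2 + (4 * t + 2 * t^2) * q + (1 - 4 * t) * q^2) = 2 * (q - t)^2 * (1 - q)"
    unfolding P1_def by (simp add: algebra_simps power2_eq_square power3_eq_cube)
  moreover have "0 \<le> 2 * (q - t)^2 * (1 - q)" using assms by simp
  ultimately show ?thesis by linarith
qed

lemma P1_le_quadratic_majorant:
  fixes q u :: real
  assumes "0 \<le> q"
  shows "P1 q \<le> 2 * u^2 * q + (3 - 4 * u) * q^2"
proof -
  have "2 * u^2 * q + (3 - 4 * u) * q^2 - P1 q = 2 * (q - u)^2 * q"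
    unfolding P1_def by (simp add: algebra_simps power2_eq_square power3_eq_cube)
  moreover have "0 \<le> 2 * (q - u)^2 * q" using assms by simp
  ultimately show ?thesis by linarith
qed

lemma AE_moment_class_unit_interval:
  assumes "\<pi> \<in> moment_class \<mu> \<nu>"
  shows "AE q in \<pi>. q \<in> {0..1}"
proof -
  interpret prob_space \<pi> using assms by (simp add: moment_class_def)
  show ?thesis using assms by (intro AE_prob_1) (auto simp: moment_class_def)
qed

lemma integrable_moment_class_continuous:
  fixes f :: "real \<Rightarrow> real"
  assumes "\<pi> \<in> moment_class \<mu> \<nu>" "continuous_on UNIV f"
  shows "integrable \<pi> f"
proof -
  interpret prob_space \<pi> using assms by (simp add: moment_class_def)
  have sets_\<pi>: "sets \<pi> = sets borel" using assms by (simp add: moment_class_def)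
  obtain B where B: "\<forall>x\<in>{0..1::real}. norm (f x) \<le> B"
    using compact_imp_bounded[OF compact_continuous_image[OF continuous_on_subset[OF assms(2)]]]
    by (auto simp: bounded_iff)
  show ?thesis
  proof (rule integrable_const_bound[where B = B])
    show "AE x in \<pi>. norm (f x) \<le> B"
      using AE_moment_class_unit_interval[OF assms(1)] by eventually_elim (use B in auto)
    have "f \<in> borel_measurable borel" using assms(2) by (rule borel_measurable_continuous_onI)
    then show "f \<in> borel_measurable \<pi>" by (subst measurable_cong_sets[OF sets_\<pi> refl])
  qed
qed

lemma integral_moment_class_quadratic:
  assumes "\<pi> \<in> moment_class \<mu> \<nu>"
  shows "(\<integral>q. a + b * q + c * q^2 \<partial>\<pi>) = a + b * \<mu> + c * \<nu>"
proof -
  interpret prob_space \<pi> using assms by (simp add: moment_class_def)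
  have int_q: "integrable \<pi> (\<lambda>q. q)"
    by (rule integrable_moment_class_continuous[OF assms]) (intro continuous_intros)
  have int_q2: "integrable \<pi> (\<lambda>q. q^2)"
    by (rule integrable_moment_class_continuous[OF assms]) (intro continuous_intros)
  have "(\<integral>q. a + b * q + c * q^2 \<partial>\<pi>) = (\<integral>q. a + b * q \<partial>\<pi>) + (\<integral>q. c * q^2 \<partial>\<pi>)"
    using int_q int_q2 by (intro Bochner_Integration.integral_add) auto
  also have "(\<integral>q. a + b * q \<partial>\<pi>) = a + b * \<mu>"
    using int_q assms prob_space
    by (subst Bochner_Integration.integral_add) (auto simp: moment_class_def)
  also have "(\<integral>q. c * q^2 \<partial>\<pi>) = c * \<nu>" using assms by (simp add: moment_class_def)
  finally show ?thesis .
qed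

lemma integral_moment_class_mono:
  fixes f g :: "real \<Rightarrow> real"
  assumes "\<pi> \<in> moment_class \<mu> \<nu>" "continuous_on UNIV f" "continuous_on UNIV g"
    and "\<And>q. 0 \<le> q \<Longrightarrow> q \<le> 1 \<Longrightarrow> f q \<le> g q"
  shows "(\<integral>q. f q \<partial>\<pi>) \<le> (\<integral>q. g q \<partial>\<pi>)"
  using integrable_moment_class_continuous[OF assms(1,2)]
    integrable_moment_class_continuous[OF assms(1,3)]
proof (rule integral_mono_AE)
  show "AE q in \<pi>. f q \<le> g q"
    using AE_moment_class_unit_interval[OF assms(1)] by eventually_elim (use assms(4) in auto)
qed

lemma continuous_on_P1: "continuous_on UNIV P1"
  unfolding P1_def by (intro continuous_intros)

lemma P1_integral_ge:
  assumes "\<pi> \<in> moment_class \<mu> \<nu>" "\<mu> \<noteq> 1"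
  shows "\<nu> + 2 * (\<mu> - \<nu>)^2 / (1 - \<mu>) \<le> (\<integral>q. P1 q \<partial>\<pi>)"
proof -
  define t where "t = (\<mu> - \<nu>) / (1 - \<mu>)"
  have \<nu>_eq: "\<nu> = \<mu> - t * (1 - \<mu>)" using assms(2) unfolding t_def by simp
  have "\<nu> + 2 * (\<mu> - \<nu>)^2 / (1 - \<mu>) = - 2 * t^2 + (4 * t + 2 * t^2) * \<mu> + (1 - 4 * t) * \<nu>"
    using assms(2) unfolding \<nu>_eq by (simp add: field_simps power2_eq_square)
  also have "\<dots> = (\<integral>q. - 2 * t^2 + (4 * t + 2 * t^2) * q + (1 - 4 * t) * q^2 \<partial>\<pi>)"
    by (rule integral_moment_class_quadratic[OF assms(1), symmetric])
  also have "\<dots> \<le> (\<integral>q. P1 q \<partial>\<pi>)"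
    by (rule integral_moment_class_mono[OF assms(1) _ continuous_on_P1])
      (intro continuous_intros, blast intro: P1_ge_quadratic_minorant)
  finally show ?thesis .
qed

lemma P1_integral_le:
  assumes "\<pi> \<in> moment_class \<mu> \<nu>" "\<mu> \<noteq> 0"
  shows "(\<integral>q. P1 q \<partial>\<pi>) \<le> 3 * \<nu> - 2 * \<nu>^2 / \<mu>"
proof -
  define u where "u = \<nu> / \<mu>"
  have "(\<integral>q. P1 q \<partial>\<pi>) \<le> (\<integral>q. 0 + 2 * u^2 * q + (3 - 4 * u) * q^2 \<partial>\<pi>)"
    by (rule integral_moment_class_mono[OF assms(1) continuous_on_P1])
      (intro continuous_intros, simp add: P1_le_quadratic_majorant)
  also have "\<dots> = 0 + 2 * u^2 * \<mu> + (3 - 4 * u) * \<nu>"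
    by (rule integral_moment_class_quadratic[OF assms(1)])
  also have "\<dots> = 3 * \<nu> - 2 * \<nu>^2 / \<mu>"
    using assms(2) unfolding u_def by (simp add: field_simps power2_eq_square)
  finally show ?thesis .
qed

definition two_point :: "real \<Rightarrow> real \<Rightarrow> real \<Rightarrow> real measure" where
  "two_point w a c = distr (measure_pmf (bernoulli_pmf w)) borel (\<lambda>b. if b then a else c)"

lemma integral_two_point:
  fixes f :: "real \<Rightarrow> real"
  assumes "0 \<le> w" "w \<le> 1" "f \<in> borel_measurable borel"
  shows "(\<integral>q. f q \<partial>two_point w a c) = w * f a + (1 - w) * f c"
proof -
  have "(\<integral>q. f q \<partial>two_point w a c)
      = (\<integral>b. f (if b then a else c) \<partial>measure_pmf (bernoulli_pmf w))"
    unfolding two_point_def by (rule integral_distr) (use assms in auto)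
  also have "\<dots> = w * f a + (1 - w) * f c" using assms by simp
  finally show ?thesis .
qed

lemma two_point_in_moment_class:
  assumes "0 \<le> w" "w \<le> 1" "a \<in> {0..1}" "c \<in> {0..1}"
    and "w * a + (1 - w) * c = \<mu>" "w * a^2 + (1 - w) * c^2 = \<nu>"
  shows "two_point w a c \<in> moment_class \<mu> \<nu>"
proof -
  have "prob_space (two_point w a c)" unfolding two_point_def
    by (rule prob_space.prob_space_distr) (auto simp: measure_pmf.prob_space_axioms)
  moreover have "measure (two_point w a c) {0..1} = 1"
    using integral_two_point[OF assms(1,2), of "indicator {0..1}" a c] assms(3,4)
    by (simp add: two_point_def measure_distr)
  ultimately show ?thesis unfolding moment_class_def using assms
    by (simp add: integral_two_point[of w "\<lambda>q. q"] integral_two_point[of w "\<lambda>q. q^2"])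
      (simp add: two_point_def)
qed

lemma P1_integral_ge_attained:
  assumes "\<mu> < 1" "\<mu>^2 \<le> \<nu>" "\<nu> \<le> \<mu>"
  shows "\<exists>\<pi>\<in>moment_class \<mu> \<nu>. (\<integral>q. P1 q \<partial>\<pi>) = \<nu> + 2 * (\<mu> - \<nu>)^2 / (1 - \<mu>)"
proof -
  define t where "t = (\<mu> - \<nu>) / (1 - \<mu>)"
  define w where "w = (\<mu> - t) / (1 - t)"
  have \<nu>_eq: "\<nu> = \<mu> - t * (1 - \<mu>)" using assms(1) unfolding t_def by simp
  have "0 \<le> t" using assms unfolding t_def by simp
  have "t * (1 - \<mu>) \<le> \<mu> * (1 - \<mu>)"
    using assms(2) unfolding \<nu>_eq by (simp add: power2_eq_square algebra_simps)
  then have "t \<le> \<mu>" using assms(1) by simp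
  then have "t < 1" "0 \<le> w" "w \<le> 1" using assms(1) \<open>0 \<le> t\<close> unfolding w_def by simp_all
  have w_gap: "w * (1 - t) = \<mu> - t" using \<open>t < 1\<close> unfolding w_def by simp
  have mean: "w * 1 + (1 - w) * t = \<mu>" using w_gap by (simp add: algebra_simps)
  have "w * 1^2 + (1 - w) * t^2 = t^2 + w * (1 - t) * (1 + t)"
    by (simp add: algebra_simps power2_eq_square)
  then have second_moment: "w * 1^2 + (1 - w) * t^2 = \<nu>"
    unfolding w_gap \<nu>_eq by (simp add: algebra_simps power2_eq_square)
  have "two_point w 1 t \<in> moment_class \<mu> \<nu>"
    using \<open>0 \<le> t\<close> \<open>t < 1\<close> \<open>0 \<le> w\<close> \<open>w \<le> 1\<close> mean second_moment
    by (intro two_point_in_moment_class) auto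
  moreover have "w * P1 1 + (1 - w) * P1 t = \<nu> + 2 * (\<mu> - \<nu>)^2 / (1 - \<mu>)"
  proof -
    have "w * P1 1 + (1 - w) * P1 t = w * (1 - t) * ((1 - t) * (1 + 2 * t)) + 3 * t^2 - 2 * t^3"
      unfolding P1_def by (simp add: algebra_simps power2_eq_square power3_eq_cube)
    also have "\<dots> = \<nu> + 2 * (t * (1 - \<mu>))^2 / (1 - \<mu>)"
      using assms(1) unfolding w_gap \<nu>_eq
      by (simp add: field_simps power2_eq_square power3_eq_cube)
    also have "t * (1 - \<mu>) = \<mu> - \<nu>" unfolding \<nu>_eq by simp
    finally show ?thesis .
  qed
  ultimately show ?thesis
    using integral_two_point[OF \<open>0 \<le> w\<close> \<open>w \<le> 1\<close> borel_measurable_continuous_onI[OF continuous_on_P1]]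
    by (intro bexI[where x = "two_point w 1 t"]) simp_all
qed

lemma P1_integral_le_attained:
  assumes "0 < \<mu>" "\<mu>^2 \<le> \<nu>" "\<nu> \<le> \<mu>"
  shows "\<exists>\<pi>\<in>moment_class \<mu> \<nu>. (\<integral>q. P1 q \<partial>\<pi>) = 3 * \<nu> - 2 * \<nu>^2 / \<mu>"
proof -
  define u where "u = \<nu> / \<mu>"
  define w where "w = \<mu> / u"
  have \<nu>_eq: "\<nu> = u * \<mu>" using assms(1) unfolding u_def by simp
  have "\<mu> * \<mu> \<le> u * \<mu>" "u * \<mu> \<le> 1 * \<mu>"
    using assms(2,3) unfolding \<nu>_eq by (simp_all add: power2_eq_square)
  then have "\<mu> \<le> u" "u \<le> 1" using assms(1) by simp_all
  then have "0 \<le> w" "w \<le> 1" using assms(1) unfolding w_def by simp_all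
  have mean: "w * u + (1 - w) * 0 = \<mu>" using assms(1) \<open>\<mu> \<le> u\<close> unfolding w_def by simp
  then have second_moment: "w * u^2 + (1 - w) * 0^2 = \<nu>"
    unfolding \<nu>_eq by (simp add: power2_eq_square algebra_simps)
  have "two_point w u 0 \<in> moment_class \<mu> \<nu>"
    using \<open>\<mu> \<le> u\<close> \<open>u \<le> 1\<close> \<open>0 \<le> w\<close> \<open>w \<le> 1\<close> assms(1) mean second_moment
    by (intro two_point_in_moment_class) auto
  moreover have "w * P1 u + (1 - w) * P1 0 = 3 * \<nu> - 2 * \<nu>^2 / \<mu>"
  proof -
    have "w * P1 u + (1 - w) * P1 0 = w * u * (3 * u - 2 * u^2)"
      unfolding P1_def by (simp add: algebra_simps power2_eq_square power3_eq_cube)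
    also have "\<dots> = 3 * \<nu> - 2 * \<nu>^2 / \<mu>"
      using assms(1) mean unfolding \<nu>_eq by (simp add: field_simps power2_eq_square)
    finally show ?thesis .
  qed
  ultimately show ?thesis
    using integral_two_point[OF \<open>0 \<le> w\<close> \<open>w \<le> 1\<close> borel_measurable_continuous_onI[OF continuous_on_P1]]
    by (intro bexI[where x = "two_point w u 0"]) simp_all
qed

lemma L1_eq:
  assumes "\<mu> < 1" "\<mu>^2 \<le> \<nu>" "\<nu> \<le> \<mu>"
  shows "L1 \<mu> \<nu> = \<nu> + 2 * (\<mu> - \<nu>)^2 / (1 - \<mu>)"
  unfolding L1_def using P1_integral_ge_attained[OF assms] P1_integral_ge assms(1)
  by (intro cInf_eq_minimum) (force, fastforce)

lemma U1_eq:
  assumes "0 < \<mu>" "\<mu>^2 \<le> \<nu>" "\<nu> \<le> \<mu>"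
  shows "U1 \<mu> \<nu> = 3 * \<nu> - 2 * \<nu>^2 / \<mu>"
  unfolding U1_def using P1_integral_le_attained[OF assms] P1_integral_le assms(1)
  by (intro cSup_eq_maximum) (force, fastforce)

lemma moment_class_P1_integral_gt_iff:
  assumes "\<mu> < 1" "\<mu>^2 \<le> \<nu>" "\<nu> \<le> \<mu>"
  shows "(\<forall>\<pi>\<in>moment_class \<mu> \<nu>. (\<integral>q. P1 q \<partial>\<pi>) > c) \<longleftrightarrow> L1 \<mu> \<nu> > c"
  unfolding L1_eq[OF assms] using P1_integral_ge_attained[OF assms] P1_integral_ge assms(1)
  by fastforce

lemma mult_one_minus_le_quarter:
  fixes x :: real
  shows "x * (1 - x) \<le> 1/4"
proof -
  have "0 \<le> (x - 1/2)^2" by simp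
  then show ?thesis by (simp add: algebra_simps power2_eq_square)
qed

theorem theorem2:
  fixes \<mu> \<rho> \<nu> s :: real
  assumes "0 < \<mu>" "\<mu> < 1" "0 \<le> \<rho>" "\<rho> \<le> 1"
    and "\<nu> = \<mu>^2 + \<rho> * \<mu> * (1 - \<mu>)"
    and "s = \<mu> * (1 - \<mu>) * (1 - \<rho>)"
  shows "L1 \<mu> \<nu> = \<nu> + 2 * (\<mu> - \<nu>)^2 / (1 - \<mu>)
    \<and> \<nu> + 2 * (\<mu> - \<nu>)^2 / (1 - \<mu>) = \<mu> + s * (2 * \<mu> * (1 - \<rho>) - 1)
    \<and> U1 \<mu> \<nu> = 3 * \<nu> - 2 * \<nu>^2 / \<mu>
    \<and> 3 * \<nu> - 2 * \<nu>^2 / \<mu> = \<mu> + s * (2 * \<mu> + 2 * \<rho> * (1 - \<mu>) - 1)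
    \<and> U1 \<mu> \<nu> - L1 \<mu> \<nu> = 2 * \<mu> * (1 - \<mu>) * \<rho> * (1 - \<rho>)
    \<and> U1 \<mu> \<nu> - L1 \<mu> \<nu> \<le> 1/8
    \<and> (\<mu> > 1/2 \<longrightarrow>
           ((\<forall>\<pi>\<in>moment_class \<mu> \<nu>. (\<integral>q. P1 q \<partial>\<pi>) > \<mu>) \<longleftrightarrow> \<rho> < 1 - 1 / (2 * \<mu>)))"
proof -
  have "0 \<le> \<rho> * (\<mu> * (1 - \<mu>))" "0 \<le> (1 - \<rho>) * (\<mu> * (1 - \<mu>))"
    using assms(1-4) by simp_all
  then have "\<mu>^2 \<le> \<nu>" "\<nu> \<le> \<mu>"
    unfolding assms(5) by (simp_all add: algebra_simps power2_eq_square)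
  note L1 = L1_eq[OF assms(2) this] and U1 = U1_eq[OF assms(1) this]
    and P1_gt_iff = moment_class_P1_integral_gt_iff[OF assms(2) this]
  have lower: "\<nu> + 2 * (\<mu> - \<nu>)^2 / (1 - \<mu>) = \<mu> + s * (2 * \<mu> * (1 - \<rho>) - 1)"
    using assms(2) unfolding assms(5,6) by (simp add: field_simps power2_eq_square)
  have upper: "3 * \<nu> - 2 * \<nu>^2 / \<mu> = \<mu> + s * (2 * \<mu> + 2 * \<rho> * (1 - \<mu>) - 1)"
    using assms(1) unfolding assms(5,6) by (simp add: field_simps power2_eq_square)
  have gap: "U1 \<mu> \<nu> - L1 \<mu> \<nu> = 2 * \<mu> * (1 - \<mu>) * \<rho> * (1 - \<rho>)"
    unfolding L1 U1 lower upper assms(6) by (simp add: algebra_simps)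
  have "(\<mu> * (1 - \<mu>)) * (\<rho> * (1 - \<rho>)) \<le> (1/4) * (1/4)"
    using assms by (intro mult_mono mult_one_minus_le_quarter) auto
  then have gap_le: "U1 \<mu> \<nu> - L1 \<mu> \<nu> \<le> 1/8" unfolding gap by (simp add: algebra_simps)
  have "L1 \<mu> \<nu> > \<mu> \<longleftrightarrow> \<rho> < 1 - 1 / (2 * \<mu>)"
  proof (cases "\<rho> = 1")
    case False
    then have "s > 0" using assms by simp
    then have "L1 \<mu> \<nu> > \<mu> \<longleftrightarrow> 2 * \<mu> * (1 - \<rho>) > 1"
      unfolding L1 lower by (simp add: zero_less_mult_iff)
    also have "\<dots> \<longleftrightarrow> \<rho> < 1 - 1 / (2 * \<mu>)" using assms by (simp add: field_simps)
    finally show ?thesis .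
  qed (use assms L1 lower in simp)
  then show ?thesis using L1 U1 lower upper gap gap_le P1_gt_iff by simp
qed

end
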